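(* Let $G$ be a countable discrete amenable group, $l:G\to[0,\infty)$ a proper length function, and $\sigma\in Z^2(G,\mathbb{T})$. Let $L=L_{\partial_l\times\partial_l}$ be the Lipschitz seminorm on $C^*_r(G,\sigma)\otimes_{\min}C^*_r(G,\sigma)^{\mathrm{op}}$ of the exterior product of the odd spectral triples $(C^*_r(G,\sigma),\ell^2(G),\partial_l)$ and $(C^*_r(G,\sigma)^{\mathrm{op}},\ell^2(G),\partial_l)$. Then for all $\phi_1,\phi_2,\phi_3,\phi_4\in P_1(G)$, $$\Delta^{\min}_{\tau_\sigma,L}(M_{\phi_1}\circ M_{\phi_2},M_{\phi_3}\circ M_{\phi_4})\le\Delta^{\min}_{\tau_\sigma,L}(M_{\phi_1},M_{\phi_3})+\Delta^{\min}_{\tau_\sigma,L}(M_{\phi_2},M_{\phi_4}).$$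
   Context: $Z^2(G,\mathbb{T})$ is the set of normalized 2-cocycles. $C_c(G,\sigma)$ is the $*$-algebra of finitely supported functions with twisted convolution $(f_1*_\sigma f_2)(x)=\sum_y f_1(y)f_2(y^{-1}x)\sigma(y,y^{-1}x)$ and involution $f^*(x)=\overline{\sigma(x,x^{-1})}\,\overline{f(x^{-1})}$. $\lambda^\sigma(f)\xi(x)=\sum_y f(y)\xi(y^{-1}x)\sigma(y,y^{-1}x)$ on $\ell^2(G)$, $\lambda^\sigma_g=\lambda^\sigma(\delta_g)$, and $C^*_r(G,\sigma)$ is the norm closure of $\lambda^\sigma(C_c(G,\sigma))$; $\tau_\sigma$ is the faithful tracial state with $\tau_\sigma(\lambda^\sigma(f))=f(1_G)$ (it is amenable since $G$ is amenable). $B^{\mathrm{op}}$ is the opposite $C^*$-algebra (same Banach space and involution, product $b^{\mathrm{op}}c^{\mathrm{op}}=(cb)^{\mathrm{op}}$); $C^*_r(G,\sigma)^{\mathrm{op}}$ is faithfully represented on $\ell^2(G)$ via $\lambda^\sigma(f)^{\mathrm{op}}\mapsto\rho^\sigma(f)$, where $\rho^\sigma(f)\xi(x)=\sum_y\xi(y)f(y^{-1}x)\sigma(y,y^{-1}x)$. A length function $l$ satisfies $l(1_G)=0$, $l(s^{-1})=l(s)$, $l(st)\le l(s)+l(t)$; it is proper if $l^{-1}([0,r])$ is finite for all $r$. $\partial_l$ is the closure of $\delta_s\mapsto l(s)\delta_s$ on $C_c(G)$. The exterior product spectral triple has Hilbert space $(\ell^2(G)\otimes\ell^2(G))^{\oplus2}$,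 with $C^*_r(G,\sigma)\otimes_{\min}C^*_r(G,\sigma)^{\mathrm{op}}$ acting diagonally through $\lambda^\sigma\otimes\rho^\sigma$, and operator $\partial_l\times\partial_l$ the closure of $\begin{pmatrix}0&\partial_l\otimes1+i\,1\otimes\partial_l\\ \partial_l\otimes1-i\,1\otimes\partial_l&0\end{pmatrix}$; $L(x)=\|[\partial_l\times\partial_l,x]\|$ for $x$ in the algebraic tensor product $\lambda^\sigma(C_c(G,\sigma))\odot\lambda^\sigma(C_c(G,\sigma))^{\mathrm{op}}$, and $L(x)=\infty$ otherwise. $P_1(G)$ is the set of positive definite functions $\phi$ on $G$ with $\phi(1_G)=1$; for such $\phi$, $M_\phi$ is the unital completely positive map on $C^*_r(G,\sigma)$ with $M_\phi(\lambda^\sigma_g)=\phi(g)\lambda^\sigma_g$. For a trace $\tau$ on unital $B$ and completely positive $F:A\to B$, $\omega^{\min}_\tau(F)$ is the continuous extension to $A\otimes_{\min}B^{\mathrm{op}}$ of $a\otimes b^{\mathrm{op}}\mapsto\tau(F(a)b)$ (existing for amenable $\tau$). For a seminorm $L$, $\mathrm{mk}_L(\varphi,\psi)=\sup\{|\varphi(x)-\psi(x)|:L(x)\le1\}$, and $\Delta^{\min}_{\tau,L}(F,G)=\mathrm{mk}_L(\omega^{\min}_\tau(F),\omega^{\min}_\tau(G))$ for trace channels $F,G$ (completely positive with $\tau(F(1))=1$). *)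

theory Defs
  imports Complex_Main "HOL-Library.Extended_Real" "HOL-Library.Countable_Set"
begin

text \<open>The discrete group G is a type of class group_add (written additively,
 not assumed commutative): product xy is x + y, inverse is -x, unit is 0.\<close>

definition supp :: "('a \<Rightarrow> complex) \<Rightarrow> 'a set" where
  "supp f = {x. f x \<noteq> 0}"

definition fin_supp :: "('a \<Rightarrow> complex) \<Rightarrow> bool" where
  "fin_supp f \<longleftrightarrow> finite (supp f)"

definition amenable_group :: "'g::group_add itself \<Rightarrow> bool" where
  "amenable_group _ \<longleftrightarrow> (\<forall>F::'g set. \<forall>\<epsilon>>0. finite F \<longrightarrow>
     (\<exists>S. finite S \<and> S \<noteq> {} \<and> (\<forall>g\<in>F.
        real (card (((+) g ` S) - S) + card (S - ((+) g ` S))) < \<epsilon> * real (card S))))"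

definition normalized_2cocycle :: "('g::group_add \<Rightarrow> 'g \<Rightarrow> complex) \<Rightarrow> bool" where
  "normalized_2cocycle \<sigma> \<longleftrightarrow>
     (\<forall>x y. cmod (\<sigma> x y) = 1) \<and>
     (\<forall>x y z. \<sigma> x y * \<sigma> (x + y) z = \<sigma> x (y + z) * \<sigma> y z) \<and>
     (\<forall>x. \<sigma> 0 x = 1 \<and> \<sigma> x 0 = 1)"

definition length_function :: "('g::group_add \<Rightarrow> real) \<Rightarrow> bool" where
  "length_function l \<longleftrightarrow> (\<forall>s. l s \<ge> 0) \<and> l 0 = 0 \<and> (\<forall>s. l (- s) = l s) \<and>
     (\<forall>s t. l (s + t) \<le> l s + l t)"

definition proper_length :: "('g::group_add \<Rightarrow> real) \<Rightarrow> bool" where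
  "proper_length l \<longleftrightarrow> length_function l \<and> (\<forall>r. finite {s. l s \<le> r})"

definition P1 :: "('g::group_add \<Rightarrow> complex) set" where
  "P1 = {\<phi>. \<phi> 0 = 1 \<and> (\<forall>n (gs::nat \<Rightarrow> 'g) (cs::nat \<Rightarrow> complex).
      (\<Sum>i<n. \<Sum>j<n. cnj (cs i) * cs j * \<phi> (- gs i + gs j)) \<in> \<real> \<and>
      Re (\<Sum>i<n. \<Sum>j<n. cnj (cs i) * cs j * \<phi> (- gs i + gs j)) \<ge> 0)}"

definition twconv :: "('g::group_add \<Rightarrow> 'g \<Rightarrow> complex) \<Rightarrow> ('g \<Rightarrow> complex) \<Rightarrow> ('g \<Rightarrow> complex) \<Rightarrow> 'g \<Rightarrow> complex" where
  "twconv \<sigma> f1 f2 x = (\<Sum>y\<in>supp f1. f1 y * f2 (- y + x) * \<sigma> y (- y + x))"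

definition delta :: "'g \<Rightarrow> 'g \<Rightarrow> complex" where
  "delta g = (\<lambda>x. if x = g then 1 else 0)"

definition tau :: "('g::group_add \<Rightarrow> complex) \<Rightarrow> complex" where
  "tau f = f 0"

text \<open>Schur multiplier M_phi on C_c(G,sigma): M_phi(lambda_g) = phi(g) lambda_g.\<close>
definition Mphi :: "('g \<Rightarrow> complex) \<Rightarrow> ('g \<Rightarrow> complex) \<Rightarrow> ('g \<Rightarrow> complex)" where
  "Mphi \<phi> f = (\<lambda>g. \<phi> g * f g)"

text \<open>An element of the algebraic tensor product
  lambda(C_c(G,sigma)) (.) lambda(C_c(G,sigma))^op is encoded by a finitely supported
  c : G x G -> C, standing for  sum c(g,h) lambda_g (x) (lambda_h)^op.
  Its action on l^2(G) (x) l^2(G) through lambda^sigma (x) rho^sigma, on a vector xi:\<close>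
definition tens_act :: "('g::group_add \<Rightarrow> 'g \<Rightarrow> complex) \<Rightarrow> ('g \<times> 'g \<Rightarrow> complex) \<Rightarrow> ('g \<times> 'g \<Rightarrow> complex) \<Rightarrow> ('g \<times> 'g \<Rightarrow> complex)" where
  "tens_act \<sigma> c \<xi> = (\<lambda>(u, v). \<Sum>p\<in>supp c. c p * \<sigma> (fst p) (- fst p + u) * \<sigma> (v - snd p) (snd p)
                                    * \<xi> (- fst p + u, v - snd p))"

definition l2norm :: "('a \<Rightarrow> complex) \<Rightarrow> real" where
  "l2norm \<xi> = sqrt (\<Sum>p\<in>supp \<xi>. (cmod (\<xi> p))^2)"

text \<open>partial_l (x) 1 +- i 1 (x) partial_l, on finitely supported vectors.\<close>
definition Dplus :: "('g \<Rightarrow> real) \<Rightarrow> ('g \<times> 'g \<Rightarrow> complex) \<Rightarrow> ('g \<times> 'g \<Rightarrow> complex)" where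
  "Dplus l \<xi> = (\<lambda>(u, v). (complex_of_real (l u) + \<i> * complex_of_real (l v)) * \<xi> (u, v))"

definition Dminus :: "('g \<Rightarrow> real) \<Rightarrow> ('g \<times> 'g \<Rightarrow> complex) \<Rightarrow> ('g \<times> 'g \<Rightarrow> complex)" where
  "Dminus l \<xi> = (\<lambda>(u, v). (complex_of_real (l u) - \<i> * complex_of_real (l v)) * \<xi> (u, v))"

definition commut :: "(('a \<Rightarrow> complex) \<Rightarrow> ('a \<Rightarrow> complex)) \<Rightarrow> (('a \<Rightarrow> complex) \<Rightarrow> ('a \<Rightarrow> complex))
     \<Rightarrow> ('a \<Rightarrow> complex) \<Rightarrow> ('a \<Rightarrow> complex)" where
  "commut D X \<xi> = (\<lambda>p. D (X \<xi>) p - X (D \<xi>) p)"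

text \<open>Lipschitz seminorm L(x) = || [partial_l x partial_l, x] || for x in the algebraic
  tensor product (x acting diagonally on the direct sum of two copies).  The norm of
  the (bounded) commutator is computed on the dense core of finitely supported vectors.\<close>
definition LipL :: "('g::group_add \<Rightarrow> 'g \<Rightarrow> complex) \<Rightarrow> ('g \<Rightarrow> real) \<Rightarrow> ('g \<times> 'g \<Rightarrow> complex) \<Rightarrow> ereal" where
  "LipL \<sigma> l c = Sup { ereal (sqrt ((l2norm (commut (Dplus l) (tens_act \<sigma> c) \<xi>2))^2
                                  + (l2norm (commut (Dminus l) (tens_act \<sigma> c) \<xi>1))^2))
                      | \<xi>1 \<xi>2. fin_supp \<xi>1 \<and> fin_supp \<xi>2 \<and> (l2norm \<xi>1)^2 + (l2norm \<xi>2)^2 \<le> 1 }"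

text \<open>omega^min_tau(F) evaluated on the algebraic tensor product:
  a (x) b^op |-> tau(F(a) b), extended linearly.\<close>
definition omega :: "('g::group_add \<Rightarrow> 'g \<Rightarrow> complex) \<Rightarrow> (('g \<Rightarrow> complex) \<Rightarrow> ('g \<Rightarrow> complex))
     \<Rightarrow> ('g \<times> 'g \<Rightarrow> complex) \<Rightarrow> complex" where
  "omega \<sigma> F c = (\<Sum>p\<in>supp c. c p * tau (twconv \<sigma> (F (delta (fst p))) (delta (snd p))))"

text \<open>Delta^min_{tau,L}(F,G) = mk_L(omega(F), omega(G)); L is infinite outside the
  algebraic tensor product, so only those elements enter the supremum.\<close>
definition DeltaMin :: "('g::group_add \<Rightarrow> 'g \<Rightarrow> complex) \<Rightarrow> ('g \<Rightarrow> real)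
     \<Rightarrow> (('g \<Rightarrow> complex) \<Rightarrow> ('g \<Rightarrow> complex)) \<Rightarrow> (('g \<Rightarrow> complex) \<Rightarrow> ('g \<Rightarrow> complex)) \<Rightarrow> ereal" where
  "DeltaMin \<sigma> l F G = Sup { ereal (cmod (omega \<sigma> F c - omega \<sigma> G c)) | c. fin_supp c \<and> LipL \<sigma> l c \<le> 1 }"

end

theory Submission
  imports Defs "HOL-Analysis.Convex"
begin

(* On the algebraic tensor product, omega(M_psi) sees psi only through the first tensor leg.
   Since phi1 phi2 - phi3 phi4 = (phi1 - phi3) phi2 + phi3 (phi2 - phi4), the difference of the
   composed channels at c is the difference of (M_phi1, M_phi3) at c (phi2 o fst) plus that of
   (M_phi2, M_phi4) at c (phi3 o fst).  So it suffices that multiplying c by chi o fst, for chi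
   in P1, does not increase the Lipschitz seminorm.  On the finitely many group elements involved,
   the positive definite kernel chi (x - y) has a Gram factorization sum_k cnj (a_k x) a_k y with
   sum_k |a_k x|^2 = chi 0 = 1.  Hence the commutator for c (chi o fst) is pointwise the combination
   sum_k cnj (a_k u) of the commutators for c applied to the vectors a_k xi, and Cauchy-Schwarz
   bounds it by the Lipschitz seminorm of c. *)

section \<open>Positive semidefinite kernels on finite sets\<close>

definition quad_form :: "'a set \<Rightarrow> ('a \<Rightarrow> 'a \<Rightarrow> complex) \<Rightarrow> ('a \<Rightarrow> complex) \<Rightarrow> complex" where
  "quad_form S K c = (\<Sum>x\<in>S. \<Sum>y\<in>S. cnj (c x) * c y * K x y)"

definition psd_on :: "'a set \<Rightarrow> ('a \<Rightarrow> 'a \<Rightarrow> complex) \<Rightarrow> bool" where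
  "psd_on S K \<longleftrightarrow> (\<forall>c. quad_form S K c \<in> \<real> \<and> 0 \<le> Re (quad_form S K c))"

lemma sum_if_pair:
  assumes "finite S" "x \<in> S" "y \<in> S" "x \<noteq> y"
  shows "(\<Sum>z\<in>S. if z = x then f z else if z = y then g z else 0) = f x + g y"
proof -
  have "(\<Sum>z\<in>{x, y}. if z = x then f z else if z = y then g z else 0)
      = (\<Sum>z\<in>S. if z = x then f z else if z = y then g z else 0)"
    by (rule sum.mono_neutral_left) (use assms in auto)
  then show ?thesis using assms(4) by simp
qed

lemma quad_form_single:
  assumes "finite S" "x \<in> S"
  shows "quad_form S K (\<lambda>z. if z = x then 1 else 0) = K x x"
proof -
  let ?c = "\<lambda>z. if z = x then (1::complex) else 0"
  have "cnj (?c z) * ?c w * K z w = (if w = x then cnj (?c z) * K z w else 0)" for z w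
    by simp
  then have row: "(\<Sum>w\<in>S. cnj (?c z) * ?c w * K z w) = cnj (?c z) * K z x" for z
    using assms by simp
  have "cnj (?c z) * K z x = (if z = x then K z x else 0)" for z
    by simp
  then show ?thesis
    unfolding quad_form_def row using assms by simp
qed

lemma quad_form_pair:
  assumes "finite S" "x \<in> S" "y \<in> S" "x \<noteq> y"
  shows "quad_form S K (\<lambda>z. if z = x then \<alpha> else if z = y then \<beta> else 0) =
     cnj \<alpha> * \<alpha> * K x x + cnj \<alpha> * \<beta> * K x y + cnj \<beta> * \<alpha> * K y x + cnj \<beta> * \<beta> * K y y"
proof -
  let ?c = "\<lambda>z. if z = x then \<alpha> else if z = y then \<beta> else 0"
  have "cnj (?c z) * ?c w * K z w = (if w = x then cnj (?c z) * \<alpha> * K z w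
      else if w = y then cnj (?c z) * \<beta> * K z w else 0)" for z w
    by simp
  then have row: "(\<Sum>w\<in>S. cnj (?c z) * ?c w * K z w)
      = cnj (?c z) * \<alpha> * K z x + cnj (?c z) * \<beta> * K z y" for z
    by (simp only: sum_if_pair[OF assms])
  have "cnj (?c z) * \<alpha> * K z x + cnj (?c z) * \<beta> * K z y
      = (if z = x then cnj \<alpha> * \<alpha> * K z x + cnj \<alpha> * \<beta> * K z y
         else if z = y then cnj \<beta> * \<alpha> * K z x + cnj \<beta> * \<beta> * K z y else 0)" for z
    by simp
  then show ?thesis
    unfolding quad_form_def row by (simp only: sum_if_pair[OF assms] add.assoc)
qed

lemma psd_on_diag:
  assumes "finite S" "psd_on S K" "x \<in> S"
  shows "K x x \<in> \<real>" "0 \<le> Re (K x x)"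
  using assms quad_form_single[OF assms(1,3), of K] unfolding psd_on_def by metis+

lemma psd_on_hermitian:
  assumes "finite S" "psd_on S K" "x \<in> S" "y \<in> S"
  shows "K y x = cnj (K x y)"
proof (cases "x = y")
  case True
  then show ?thesis
    using psd_on_diag[OF assms(1-3)] by (simp add: complex_eq_iff complex_is_Real_iff)
next
  case False
  have diag: "Im (K x x) = 0" "Im (K y y) = 0"
    using psd_on_diag[OF assms(1,2)] assms(3,4) by (auto simp: complex_is_Real_iff)
  have real_pair: "quad_form S K (\<lambda>z. if z = x then 1 else if z = y then \<beta> else 0) \<in> \<real>" for \<beta>
    using assms(2) unfolding psd_on_def by blast
  have "Im (K x y) + Im (K y x) = 0" "Re (K x y) - Re (K y x) = 0"
    using real_pair[of 1] real_pair[of \<i>] diag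
    unfolding quad_form_pair[OF assms(1,3,4) False] by (simp_all add: complex_is_Real_iff)
  then show ?thesis by (simp add: complex_eq_iff)
qed

lemma psd_on_zero_diag:
  assumes "finite S" "psd_on S K" "x \<in> S" "y \<in> S" "K x x = 0"
  shows "K x y = 0"
proof (rule ccontr)
  assume ne: "K x y \<noteq> 0"
  then have "x \<noteq> y" using assms(5) by auto
  define w where "w = K x y"
  \<comment> \<open>At \<open>c = - r w \<delta>\<^sub>x + \<delta>\<^sub>y\<close> the form is \<open>K y y - 2 r |w|\<^sup>2\<close>, negative for this \<open>r\<close>.\<close>
  define r where "r = (Re (K y y) + 1) / (2 * (Re w ^ 2 + Im w ^ 2))"
  have pos: "Re w ^ 2 + Im w ^ 2 > 0"
    using ne unfolding w_def by (simp add: complex_eq_iff sum_power2_gt_zero_iff)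
  have "K y x = cnj w" using psd_on_hermitian[OF assms(1-4)] w_def by simp
  moreover have "0 \<le> Re (quad_form S K (\<lambda>z. if z = x then - (of_real r * w) else if z = y then 1 else 0))"
    using assms(2) unfolding psd_on_def by blast
  ultimately have "0 \<le> - 2 * r * (Re w ^ 2 + Im w ^ 2) + Re (K y y)"
    unfolding quad_form_pair[OF assms(1,3,4) \<open>x \<noteq> y\<close>] using assms(5) w_def
    by (simp add: algebra_simps power2_eq_square)
  moreover have "2 * r * (Re w ^ 2 + Im w ^ 2) = Re (K y y) + 1"
    unfolding r_def using pos by (simp add: field_simps)
  ultimately show False by linarith
qed

lemma psd_on_subset:
  assumes "finite S" "psd_on S K" "F \<subseteq> S"
  shows "psd_on F K"
  unfolding psd_on_def
proof
  fix c :: "'a \<Rightarrow> complex"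
  let ?c = "\<lambda>z. if z \<in> F then c z else 0"
  have fF: "finite F" using finite_subset[OF assms(3,1)] .
  have row: "(\<Sum>y\<in>S. cnj (?c x) * ?c y * K x y) = (\<Sum>y\<in>F. cnj (?c x) * ?c y * K x y)" for x
    by (rule sum.mono_neutral_right) (use assms fF in auto)
  have "quad_form S K ?c = (\<Sum>x\<in>F. \<Sum>y\<in>F. cnj (?c x) * ?c y * K x y)"
    unfolding quad_form_def row by (rule sum.mono_neutral_right) (use assms fF in auto)
  also have "\<dots> = quad_form F K c"
    unfolding quad_form_def by (intro sum.cong) auto
  finally show "quad_form F K c \<in> \<real> \<and> 0 \<le> Re (quad_form F K c)"
    using assms(2) unfolding psd_on_def by metis
qed

lemma psd_on_cong:
  assumes "\<And>x y. x \<in> S \<Longrightarrow> y \<in> S \<Longrightarrow> K x y = K' x y"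
  shows "psd_on S K \<longleftrightarrow> psd_on S K'"
proof -
  have "quad_form S K = quad_form S K'"
    unfolding quad_form_def using assms by (intro ext sum.cong) auto
  then show ?thesis unfolding psd_on_def by simp
qed

lemma psd_on_schur_complement:
  assumes "finite F" "x0 \<notin> F" "psd_on (insert x0 F) K" "K x0 x0 \<noteq> 0"
  shows "psd_on F (\<lambda>x y. K x y - K x x0 * K x0 y / K x0 x0)"
  unfolding psd_on_def
proof
  fix c :: "'a \<Rightarrow> complex"
  define s where "s = (\<Sum>y\<in>F. c y * K x0 y)"
  define t where "t = (\<Sum>x\<in>F. cnj (c x) * K x x0)"
  \<comment> \<open>Extending \<open>c\<close> to \<open>x0\<close> by the minimising value turns the form on \<open>insert x0 F\<close>
      into the Schur complement form on \<open>F\<close>.\<close>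
  define c' where "c' = c(x0 := - cnj (t / K x0 x0))"
  have c'F: "\<And>z. z \<in> F \<Longrightarrow> c' z = c z" unfolding c'_def using assms(2) by auto
  let ?Q = "quad_form F K c"
  have "quad_form (insert x0 F) K c'
      = cnj (c' x0) * c' x0 * K x0 x0 + cnj (c' x0) * s + c' x0 * t + ?Q"
    using assms(1,2) c'F unfolding quad_form_def s_def t_def
    by (simp add: sum.distrib sum_distrib_left algebra_simps)
  also have "\<dots> = ?Q - t * s / K x0 x0"
    unfolding c'_def using assms(4) by (simp add: field_simps)
  also have "\<dots> = ?Q - (\<Sum>x\<in>F. \<Sum>y\<in>F. cnj (c x) * c y * (K x x0 * K x0 y / K x0 x0))"
    unfolding s_def t_def sum_product sum_divide_distrib by (simp add: mult_ac)
  also have "\<dots> = quad_form F (\<lambda>x y. K x y - K x x0 * K x0 y / K x0 x0) c"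
    unfolding quad_form_def by (simp add: sum_subtractf right_diff_distrib)
  finally show "quad_form F (\<lambda>x y. K x y - K x x0 * K x0 y / K x0 x0) c \<in> \<real> \<and>
      0 \<le> Re (quad_form F (\<lambda>x y. K x y - K x x0 * K x0 y / K x0 x0) c)"
    using assms(3) unfolding psd_on_def by metis
qed

lemma psd_on_rank_one_split:
  assumes "finite F" "x0 \<notin> F" "psd_on (insert x0 F) K"
  obtains b where "psd_on F (\<lambda>x y. K x y - cnj (b x) * b y)"
    and "\<And>y. y \<in> insert x0 F \<Longrightarrow> K x0 y = cnj (b x0) * b y \<and> K y x0 = cnj (b y) * b x0"
proof -
  let ?S = "insert x0 F"
  have fS: "finite ?S" using assms(1) by simp
  have herm: "\<And>x y. x \<in> ?S \<Longrightarrow> y \<in> ?S \<Longrightarrow> K y x = cnj (K x y)"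
    using psd_on_hermitian[OF fS assms(3)] by blast
  define d where "d = Re (K x0 x0)"
  have d0: "0 \<le> d" and Kd: "K x0 x0 = of_real d"
    using psd_on_diag[OF fS assms(3), of x0] by (auto simp: d_def complex_eq_iff complex_is_Real_iff)
  show ?thesis
  proof (cases "d = 0")
    case True
    have row0: "K x0 y = 0" if "y \<in> ?S" for y
      using psd_on_zero_diag[OF fS assms(3) _ that] Kd True by simp
    show ?thesis
    proof (rule that[of "\<lambda>_. 0"])
      show "psd_on F (\<lambda>x y. K x y - cnj 0 * 0)"
        using psd_on_subset[OF fS assms(3)] by auto
      show "K x0 y = cnj 0 * 0 \<and> K y x0 = cnj 0 * 0" if "y \<in> ?S" for y
        using row0[OF that] herm[OF insertI1 that] by simp
    qed
  next
    case False
    then have dpos: "0 < d" using d0 by simp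
    have sqrt_sq: "of_real (sqrt d) * of_real (sqrt d) = (of_real d :: complex)"
      using d0 by (simp flip: of_real_mult)
    define b where "b y = K x0 y / of_real (sqrt d)" for y
    have b0: "b x0 = of_real (sqrt d)"
      unfolding b_def Kd using dpos by (simp add: real_div_sqrt flip: of_real_divide)
    have rank_one: "cnj (b x) * b y = K x x0 * K x0 y / K x0 x0" if "x \<in> ?S" for x y
      unfolding b_def Kd using herm[OF insertI1 that] sqrt_sq by (simp add: field_simps)
    show ?thesis
    proof (rule that[of b])
      show "psd_on F (\<lambda>x y. K x y - cnj (b x) * b y)"
        using psd_on_schur_complement[OF assms] Kd dpos rank_one
        by (subst psd_on_cong[where K'="\<lambda>x y. K x y - K x x0 * K x0 y / K x0 x0"]) auto
      show "K x0 y = cnj (b x0) * b y \<and> K y x0 = cnj (b y) * b x0" if "y \<in> ?S" for y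
        using herm[OF insertI1 that] dpos unfolding b0 by (simp add: b_def)
    qed
  qed
qed

lemma psd_on_gram_factorization:
  assumes "finite S" "psd_on S K"
  shows "\<exists>a. \<forall>x\<in>S. \<forall>y\<in>S. K x y = (\<Sum>k\<in>S. cnj (a k x) * a k y)"
  using assms
proof (induction S arbitrary: K rule: finite_induct)
  case empty
  then show ?case by simp
next
  case (insert x0 F)
  obtain b where psd: "psd_on F (\<lambda>x y. K x y - cnj (b x) * b y)"
    and rows: "\<And>y. y \<in> insert x0 F \<Longrightarrow> K x0 y = cnj (b x0) * b y \<and> K y x0 = cnj (b y) * b x0"
    using psd_on_rank_one_split[OF insert.hyps insert.prems] by blast
  obtain a' where a': "\<forall>x\<in>F. \<forall>y\<in>F. K x y - cnj (b x) * b y = (\<Sum>k\<in>F. cnj (a' k x) * a' k y)"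
    using insert.IH[OF psd] by blast
  define a where "a k y = (if k = x0 then b y else if y = x0 then 0 else a' k y)" for k y
  have "K x y = (\<Sum>k\<in>insert x0 F. cnj (a k x) * a k y)"
    if x: "x \<in> insert x0 F" and y: "y \<in> insert x0 F" for x y
  proof -
    have split: "(\<Sum>k\<in>insert x0 F. cnj (a k x) * a k y) = cnj (b x) * b y + (\<Sum>k\<in>F. cnj (a k x) * a k y)"
      using insert.hyps by (simp add: a_def)
    show ?thesis
    proof (cases "x = x0 \<or> y = x0")
      case True
      then have "(\<Sum>k\<in>F. cnj (a k x) * a k y) = 0"
        using insert.hyps unfolding a_def by (intro sum.neutral) auto
      then show ?thesis using split rows x y True by auto
    next
      case False
      then have "(\<Sum>k\<in>F. cnj (a k x) * a k y) = (\<Sum>k\<in>F. cnj (a' k x) * a' k y)"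
        using insert.hyps unfolding a_def by (intro sum.cong) auto
      moreover have "K x y - cnj (b x) * b y = (\<Sum>k\<in>F. cnj (a' k x) * a' k y)"
        using a' x y False by simp
      ultimately show ?thesis using split by (metis diff_add_cancel add.commute)
    qed
  qed
  then show ?case by blast
qed

(* P1 is phrased with phi (- g_i + g_j); the choice g_i = - h i turns it into the kernel phi (x - y). *)
lemma P1_psd_on:
  assumes "\<chi> \<in> P1" "finite S"
  shows "psd_on S (\<lambda>x y. \<chi> (x - y))"
  unfolding psd_on_def
proof
  fix c :: "'a \<Rightarrow> complex"
  obtain h where h: "bij_betw h {..<card S} S"
    using ex_bij_betw_nat_finite[OF assms(2)] by (auto simp: atLeast0LessThan)
  let ?q = "\<Sum>i<card S. \<Sum>j<card S. cnj (c (h i)) * c (h j) * \<chi> (- (- h i) + - h j)"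
  have "quad_form S (\<lambda>x y. \<chi> (x - y)) c = (\<Sum>i<card S. \<Sum>y\<in>S. cnj (c (h i)) * c y * \<chi> (h i - y))"
    unfolding quad_form_def by (rule sum.reindex_bij_betw[OF h, symmetric])
  also have "\<dots> = (\<Sum>i<card S. \<Sum>j<card S. cnj (c (h i)) * c (h j) * \<chi> (h i - h j))"
    by (intro sum.cong refl sum.reindex_bij_betw[OF h, symmetric])
  also have "\<dots> = ?q"
    by simp
  finally have "quad_form S (\<lambda>x y. \<chi> (x - y)) c = ?q" .
  moreover have "?q \<in> \<real> \<and> 0 \<le> Re ?q"
    using assms(1) unfolding P1_def by (simp only: mem_Collect_eq)
  ultimately show "quad_form S (\<lambda>x y. \<chi> (x - y)) c \<in> \<real> \<and> 0 \<le> Re (quad_form S (\<lambda>x y. \<chi> (x - y)) c)"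
    by simp
qed

lemma P1_gram_factorization:
  assumes "\<chi> \<in> P1" "finite S"
  obtains a where "\<And>x y. x \<in> S \<Longrightarrow> y \<in> S \<Longrightarrow> \<chi> (x - y) = (\<Sum>k\<in>S. cnj (a k x) * a k y)"
    and "\<And>x. x \<in> S \<Longrightarrow> (\<Sum>k\<in>S. (cmod (a k x))\<^sup>2) = 1"
proof -
  obtain a where gram: "\<And>x y. x \<in> S \<Longrightarrow> y \<in> S \<Longrightarrow> \<chi> (x - y) = (\<Sum>k\<in>S. cnj (a k x) * a k y)"
    using psd_on_gram_factorization[OF assms(2) P1_psd_on[OF assms]] by blast
  have "(\<Sum>k\<in>S. (cmod (a k x))\<^sup>2) = 1" if "x \<in> S" for x
  proof -
    have "complex_of_real (\<Sum>k\<in>S. (cmod (a k x))\<^sup>2) = (\<Sum>k\<in>S. cnj (a k x) * a k x)"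
      unfolding of_real_sum complex_norm_square by (simp add: mult.commute)
    also have "\<dots> = \<chi> 0" using gram[OF that that] by simp
    also have "\<dots> = 1" using assms(1) by (simp add: P1_def)
    finally show ?thesis by (metis of_real_1 of_real_eq_iff)
  qed
  then show ?thesis using gram that by blast
qed

section \<open>The tensor action and its commutators\<close>

definition mult_by :: "('a \<Rightarrow> complex) \<Rightarrow> ('a \<Rightarrow> complex) \<Rightarrow> 'a \<Rightarrow> complex" where
  "mult_by d f = (\<lambda>p. d p * f p)"

lemma mult_by_apply [simp]: "mult_by d f p = d p * f p"
  by (simp add: mult_by_def)

lemma Dplus_eq_mult_by:
  "Dplus l = mult_by (\<lambda>(u, v). complex_of_real (l u) + \<i> * complex_of_real (l v))"
  by (auto simp: fun_eq_iff Dplus_def mult_by_def split: prod.split)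

lemma Dminus_eq_mult_by:
  "Dminus l = mult_by (\<lambda>(u, v). complex_of_real (l u) - \<i> * complex_of_real (l v))"
  by (auto simp: fun_eq_iff Dminus_def mult_by_def split: prod.split)

lemma supp_mult_by: "supp (mult_by d f) \<subseteq> supp f"
  by (auto simp: supp_def mult_by_def)

lemma fin_supp_mult_by: "fin_supp f \<Longrightarrow> fin_supp (mult_by d f)"
  unfolding fin_supp_def by (rule finite_subset[OF supp_mult_by])

lemma mult_by_commute: "mult_by d (mult_by e f) = mult_by e (mult_by d f)"
  by (simp add: mult_by_def mult.left_commute)

(* lambda_g (x) rho_h moves the basis vector at (u, v) to (g + u, v + h). *)
definition tens_support :: "('g::group_add \<times> 'g \<Rightarrow> complex) \<Rightarrow> ('g \<times> 'g) set \<Rightarrow> ('g \<times> 'g) set" where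
  "tens_support c A = (\<lambda>(p, q). (fst p + fst q, snd q + snd p)) ` (supp c \<times> A)"

lemma tens_support_mono:
  "A \<subseteq> A' \<Longrightarrow> supp c \<subseteq> supp c' \<Longrightarrow> tens_support c A \<subseteq> tens_support c' A'"
  unfolding tens_support_def by (intro image_mono Sigma_mono)

lemma finite_tens_support: "finite (supp c) \<Longrightarrow> finite A \<Longrightarrow> finite (tens_support c A)"
  unfolding tens_support_def by (intro finite_imageI finite_cartesian_product)

lemma supp_tens_act: "supp (tens_act \<sigma> c \<xi>) \<subseteq> tens_support c (supp \<xi>)"
proof
  fix q assume "q \<in> supp (tens_act \<sigma> c \<xi>)"
  moreover obtain u v where q: "q = (u, v)" by fastforce
  ultimately have "tens_act \<sigma> c \<xi> (u, v) \<noteq> 0" by (simp add: supp_def)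
  then have "(\<Sum>p\<in>supp c. c p * \<sigma> (fst p) (- fst p + u) * \<sigma> (v - snd p) (snd p)
      * \<xi> (- fst p + u, v - snd p)) \<noteq> 0"
    by (simp add: tens_act_def)
  then obtain p where p: "p \<in> supp c" and "c p * \<sigma> (fst p) (- fst p + u) * \<sigma> (v - snd p) (snd p)
      * \<xi> (- fst p + u, v - snd p) \<noteq> 0"
    by (rule sum.not_neutral_contains_not_neutral)
  then have "(p, (- fst p + u, v - snd p)) \<in> supp c \<times> supp \<xi>"
    using p by (simp add: supp_def)
  moreover have "(u, v) = (\<lambda>(p, q). (fst p + fst q, snd q + snd p)) (p, (- fst p + u, v - snd p))"
    by (simp add: add.assoc[symmetric])
  ultimately show "q \<in> tens_support c (supp \<xi>)"
    unfolding tens_support_def q by (rule rev_image_eqI)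
qed

lemma supp_commut_mult_by:
  "supp (commut (mult_by d) (tens_act \<sigma> c) \<xi>) \<subseteq> tens_support c (supp \<xi>)"
proof -
  have "supp (commut (mult_by d) (tens_act \<sigma> c) \<xi>)
      \<subseteq> supp (tens_act \<sigma> c \<xi>) \<union> supp (tens_act \<sigma> c (mult_by d \<xi>))"
    by (auto simp: supp_def commut_def mult_by_def)
  also have "\<dots> \<subseteq> tens_support c (supp \<xi>)"
    using supp_tens_act tens_support_mono[OF supp_mult_by order_refl] by blast
  finally show ?thesis .
qed

lemma tens_act_mult_by_fst:
  assumes "finite (supp c)"
    and gram: "\<And>x y. x \<in> S \<Longrightarrow> y \<in> S \<Longrightarrow> \<chi> (x - y) = (\<Sum>k\<in>I. cnj (a k x) * a k y)"
    and "fst ` supp \<zeta> \<subseteq> S" and "u \<in> S"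
  shows "tens_act \<sigma> (mult_by (\<chi> \<circ> fst) c) \<zeta> (u, v)
       = (\<Sum>k\<in>I. cnj (a k u) * tens_act \<sigma> c (mult_by (a k \<circ> fst) \<zeta>) (u, v))"
proof -
  let ?t = "\<lambda>p. c p * \<sigma> (fst p) (- fst p + u) * \<sigma> (v - snd p) (snd p)"
  let ?z = "\<lambda>p. \<zeta> (- fst p + u, v - snd p)"
  have "tens_act \<sigma> (mult_by (\<chi> \<circ> fst) c) \<zeta> (u, v) = (\<Sum>p\<in>supp c. \<chi> (fst p) * ?t p * ?z p)"
    unfolding tens_act_def mult_by_def
    by (simp add: mult.assoc, rule sum.mono_neutral_left) (use assms(1) in \<open>auto simp: supp_def\<close>)
  also have "\<dots> = (\<Sum>p\<in>supp c. \<Sum>k\<in>I. cnj (a k u) * (?t p * (a k (- fst p + u) * ?z p)))"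
  proof (rule sum.cong[OF refl])
    fix p
    show "\<chi> (fst p) * ?t p * ?z p = (\<Sum>k\<in>I. cnj (a k u) * (?t p * (a k (- fst p + u) * ?z p)))"
    proof (cases "?z p = 0")
      case False
      then have "- fst p + u \<in> S"
        using assms(3) by (force simp: supp_def)
      moreover have "u - (- fst p + u) = fst p"
        by (simp add: diff_conv_add_uminus minus_add add.assoc[symmetric])
      ultimately have "\<chi> (fst p) = (\<Sum>k\<in>I. cnj (a k u) * a k (- fst p + u))"
        using gram[OF assms(4)] by metis
      then show ?thesis by (simp add: sum_distrib_left sum_distrib_right algebra_simps)
    qed simp
  qed
  also have "\<dots> = (\<Sum>k\<in>I. cnj (a k u) * tens_act \<sigma> c (mult_by (a k \<circ> fst) \<zeta>) (u, v))"
    unfolding tens_act_def mult_by_def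
    by (subst sum.swap) (simp add: sum_distrib_left algebra_simps)
  finally show ?thesis .
qed

lemma commut_mult_by_fst:
  assumes "finite (supp c)"
    and gram: "\<And>x y. x \<in> S \<Longrightarrow> y \<in> S \<Longrightarrow> \<chi> (x - y) = (\<Sum>k\<in>I. cnj (a k x) * a k y)"
    and "fst ` supp \<xi> \<subseteq> S" and "u \<in> S"
  shows "commut (mult_by d) (tens_act \<sigma> (mult_by (\<chi> \<circ> fst) c)) \<xi> (u, v)
       = (\<Sum>k\<in>I. cnj (a k u) * commut (mult_by d) (tens_act \<sigma> c) (mult_by (a k \<circ> fst) \<xi>) (u, v))"
proof -
  have "fst ` supp (mult_by d \<xi>) \<subseteq> S"
    using assms(3) supp_mult_by[of d \<xi>] by blast
  with assms have "tens_act \<sigma> (mult_by (\<chi> \<circ> fst) c) (mult_by d \<xi>) (u, v)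
      = (\<Sum>k\<in>I. cnj (a k u) * tens_act \<sigma> c (mult_by d (mult_by (a k \<circ> fst) \<xi>)) (u, v))"
    unfolding mult_by_commute[of d]
    by (intro tens_act_mult_by_fst[where S = S and \<chi> = \<chi> and a = a]) auto
  moreover have "tens_act \<sigma> (mult_by (\<chi> \<circ> fst) c) \<xi> (u, v)
      = (\<Sum>k\<in>I. cnj (a k u) * tens_act \<sigma> c (mult_by (a k \<circ> fst) \<xi>) (u, v))"
    by (rule tens_act_mult_by_fst[where S = S and \<chi> = \<chi> and a = a]) (use assms in auto)
  ultimately show ?thesis
    by (simp add: commut_def sum_distrib_left sum_subtractf algebra_simps)
qed

lemma norm_sum_cnj_mult_sq_le:
  "(cmod (\<Sum>k\<in>I. cnj (a k) * y k))\<^sup>2 \<le> (\<Sum>k\<in>I. (cmod (a k))\<^sup>2) * (\<Sum>k\<in>I. (cmod (y k))\<^sup>2)"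
proof -
  have "cmod (\<Sum>k\<in>I. cnj (a k) * y k) \<le> (\<Sum>k\<in>I. cmod (a k) * cmod (y k))"
    by (rule order_trans[OF norm_sum]) (simp add: norm_mult)
  then have "(cmod (\<Sum>k\<in>I. cnj (a k) * y k))\<^sup>2 \<le> (\<Sum>k\<in>I. cmod (a k) * cmod (y k))\<^sup>2"
    by (rule power_mono) simp
  also have "\<dots> \<le> (\<Sum>k\<in>I. (cmod (a k))\<^sup>2) * (\<Sum>k\<in>I. (cmod (y k))\<^sup>2)"
    by (rule Cauchy_Schwarz_ineq_sum)
  finally show ?thesis .
qed

lemma l2norm_sq_eq_sum:
  assumes "finite B" "supp \<xi> \<subseteq> B"
  shows "(l2norm \<xi>)\<^sup>2 = (\<Sum>p\<in>B. (cmod (\<xi> p))\<^sup>2)"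
proof -
  have "(l2norm \<xi>)\<^sup>2 = (\<Sum>p\<in>supp \<xi>. (cmod (\<xi> p))\<^sup>2)"
    unfolding l2norm_def by (simp add: sum_nonneg)
  also have "\<dots> = (\<Sum>p\<in>B. (cmod (\<xi> p))\<^sup>2)"
    by (rule sum.mono_neutral_left) (use assms in \<open>auto simp: supp_def\<close>)
  finally show ?thesis .
qed

lemma l2norm_commut_mult_by_fst_le:
  assumes "finite B" "supp \<xi> \<subseteq> B" "tens_support c (supp \<xi>) \<subseteq> B" "fst ` B \<subseteq> S"
    and "finite (supp c)"
    and gram: "\<And>x y. x \<in> S \<Longrightarrow> y \<in> S \<Longrightarrow> \<chi> (x - y) = (\<Sum>k\<in>I. cnj (a k x) * a k y)"
    and unit: "\<And>x. x \<in> S \<Longrightarrow> (\<Sum>k\<in>I. (cmod (a k x))\<^sup>2) = 1"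
  shows "(l2norm (commut (mult_by d) (tens_act \<sigma> (mult_by (\<chi> \<circ> fst) c)) \<xi>))\<^sup>2
     \<le> (\<Sum>k\<in>I. (l2norm (commut (mult_by d) (tens_act \<sigma> c) (mult_by (a k \<circ> fst) \<xi>)))\<^sup>2)"
proof -
  let ?T' = "commut (mult_by d) (tens_act \<sigma> (mult_by (\<chi> \<circ> fst) c)) \<xi>"
  let ?T = "\<lambda>k. commut (mult_by d) (tens_act \<sigma> c) (mult_by (a k \<circ> fst) \<xi>)"
  have supp_T': "supp ?T' \<subseteq> B"
    using supp_commut_mult_by tens_support_mono[OF order_refl supp_mult_by] assms(3) by blast
  have supp_T: "supp (?T k) \<subseteq> B" for k
    using supp_commut_mult_by tens_support_mono[OF supp_mult_by order_refl] assms(3) by blast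
  have pointwise: "(cmod (?T' q))\<^sup>2 \<le> (\<Sum>k\<in>I. (cmod (?T k q))\<^sup>2)" if "q \<in> B" for q
  proof -
    obtain u v where q: "q = (u, v)" by fastforce
    have u: "u \<in> S" using that assms(4) q by force
    have "?T' q = (\<Sum>k\<in>I. cnj (a k u) * ?T k q)"
      unfolding q
      by (rule commut_mult_by_fst[where S = S and \<chi> = \<chi> and a = a]) (use assms u in auto)
    then show ?thesis
      using norm_sum_cnj_mult_sq_le[where I = I and a = "\<lambda>k. a k u" and y = "\<lambda>k. ?T k q"] unit[OF u] by simp
  qed
  have "(l2norm ?T')\<^sup>2 = (\<Sum>q\<in>B. (cmod (?T' q))\<^sup>2)"
    by (rule l2norm_sq_eq_sum[OF assms(1) supp_T'])
  also have "\<dots> \<le> (\<Sum>q\<in>B. \<Sum>k\<in>I. (cmod (?T k q))\<^sup>2)"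
    by (rule sum_mono) (rule pointwise)
  also have "\<dots> = (\<Sum>k\<in>I. (l2norm (?T k))\<^sup>2)"
    by (subst sum.swap) (simp only: l2norm_sq_eq_sum[OF assms(1) supp_T])
  finally show ?thesis .
qed

lemma sum_l2norm_mult_by_fst:
  assumes "fin_supp \<xi>" "fst ` supp \<xi> \<subseteq> S"
    and unit: "\<And>x. x \<in> S \<Longrightarrow> (\<Sum>k\<in>I. (cmod (a k x))\<^sup>2) = 1"
  shows "(\<Sum>k\<in>I. (l2norm (mult_by (a k \<circ> fst) \<xi>))\<^sup>2) = (l2norm \<xi>)\<^sup>2"
proof -
  have fin: "finite (supp \<xi>)" using assms(1) by (simp add: fin_supp_def)
  have "(\<Sum>k\<in>I. (l2norm (mult_by (a k \<circ> fst) \<xi>))\<^sup>2)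
      = (\<Sum>k\<in>I. \<Sum>q\<in>supp \<xi>. (cmod (a k (fst q)))\<^sup>2 * (cmod (\<xi> q))\<^sup>2)"
    by (simp add: l2norm_sq_eq_sum[OF fin supp_mult_by] norm_mult power_mult_distrib)
  also have "\<dots> = (\<Sum>q\<in>supp \<xi>. (\<Sum>k\<in>I. (cmod (a k (fst q)))\<^sup>2) * (cmod (\<xi> q))\<^sup>2)"
    by (subst sum.swap) (simp add: sum_distrib_right)
  also have "\<dots> = (l2norm \<xi>)\<^sup>2"
    using assms(2) unit by (simp add: l2norm_sq_eq_sum[OF fin order_refl] image_subset_iff)
  finally show ?thesis .
qed

section \<open>The Lipschitz seminorm\<close>

definition commut_norm_sq :: "('g::group_add \<Rightarrow> 'g \<Rightarrow> complex) \<Rightarrow> ('g \<Rightarrow> real) \<Rightarrow> ('g \<times> 'g \<Rightarrow> complex)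
    \<Rightarrow> ('g \<times> 'g \<Rightarrow> complex) \<Rightarrow> ('g \<times> 'g \<Rightarrow> complex) \<Rightarrow> real" where
  "commut_norm_sq \<sigma> l c \<xi>1 \<xi>2 = (l2norm (commut (Dplus l) (tens_act \<sigma> c) \<xi>2))\<^sup>2
                                 + (l2norm (commut (Dminus l) (tens_act \<sigma> c) \<xi>1))\<^sup>2"

lemma LipL_eq_Sup_commut_norm_sq:
  "LipL \<sigma> l c = Sup {ereal (sqrt (commut_norm_sq \<sigma> l c \<xi>1 \<xi>2)) | \<xi>1 \<xi>2.
     fin_supp \<xi>1 \<and> fin_supp \<xi>2 \<and> (l2norm \<xi>1)\<^sup>2 + (l2norm \<xi>2)\<^sup>2 \<le> 1}"
  unfolding LipL_def commut_norm_sq_def ..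

lemma tens_act_scale: "tens_act \<sigma> c (mult_by (\<lambda>_. t) \<zeta>) = mult_by (\<lambda>_. t) (tens_act \<sigma> c \<zeta>)"
  by (auto simp: fun_eq_iff tens_act_def sum_distrib_left algebra_simps)

lemma commut_scale:
  "commut (mult_by d) (tens_act \<sigma> c) (mult_by (\<lambda>_. t) \<zeta>)
     = mult_by (\<lambda>_. t) (commut (mult_by d) (tens_act \<sigma> c) \<zeta>)"
  unfolding commut_def mult_by_commute[of d] tens_act_scale by (simp add: fun_eq_iff algebra_simps)

lemma l2norm_scale: "l2norm (mult_by (\<lambda>_. complex_of_real r) \<zeta>) = \<bar>r\<bar> * l2norm \<zeta>"
proof (cases "r = 0")
  case True
  then show ?thesis by (simp add: l2norm_def supp_def)
next
  case False
  then have "supp (mult_by (\<lambda>_. complex_of_real r) \<zeta>) = supp \<zeta>" by (auto simp: supp_def)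
  then have "l2norm (mult_by (\<lambda>_. complex_of_real r) \<zeta>) = sqrt (r\<^sup>2 * (\<Sum>p\<in>supp \<zeta>. (cmod (\<zeta> p))\<^sup>2))"
    unfolding l2norm_def by (simp add: norm_mult power_mult_distrib sum_distrib_left)
  then show ?thesis unfolding l2norm_def by (simp add: real_sqrt_mult)
qed

lemma commut_norm_sq_scale:
  "commut_norm_sq \<sigma> l c (mult_by (\<lambda>_. complex_of_real r) \<zeta>1) (mult_by (\<lambda>_. complex_of_real r) \<zeta>2)
     = r\<^sup>2 * commut_norm_sq \<sigma> l c \<zeta>1 \<zeta>2"
  unfolding commut_norm_sq_def Dplus_eq_mult_by Dminus_eq_mult_by commut_scale l2norm_scale
  by (simp add: power_mult_distrib algebra_simps)

lemma commut_norm_sq_zero: "commut_norm_sq \<sigma> l c (\<lambda>_. 0) (\<lambda>_. 0) = 0"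
  using commut_norm_sq_scale[of \<sigma> l c 0 "\<lambda>_. 0" "\<lambda>_. 0"] by (simp add: mult_by_def)

lemma l2norm_eq_0:
  assumes "fin_supp \<xi>" "l2norm \<xi> = 0"
  shows "\<xi> = (\<lambda>_. 0)"
proof -
  have fin: "finite (supp \<xi>)" using assms(1) by (simp add: fin_supp_def)
  have "(\<Sum>p\<in>supp \<xi>. (cmod (\<xi> p))\<^sup>2) = 0" using assms(2) unfolding l2norm_def by simp
  then have "\<forall>p\<in>supp \<xi>. (cmod (\<xi> p))\<^sup>2 = 0"
    by (simp add: sum_nonneg_eq_0_iff[OF fin])
  then show ?thesis by (auto simp: supp_def fun_eq_iff)
qed

lemma LipL_nonneg: "0 \<le> LipL \<sigma> l c"
proof -
  have "ereal (sqrt (commut_norm_sq \<sigma> l c (\<lambda>_. 0) (\<lambda>_. 0))) \<le> LipL \<sigma> l c"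
    unfolding LipL_eq_Sup_commut_norm_sq
    by (rule Sup_upper) (force simp: fin_supp_def supp_def l2norm_def)
  then show ?thesis by (simp add: commut_norm_sq_zero zero_ereal_def)
qed

lemma commut_norm_sq_le_LipL:
  assumes "LipL \<sigma> l c \<le> ereal m" "fin_supp \<zeta>1" "fin_supp \<zeta>2"
  shows "commut_norm_sq \<sigma> l c \<zeta>1 \<zeta>2 \<le> m\<^sup>2 * ((l2norm \<zeta>1)\<^sup>2 + (l2norm \<zeta>2)\<^sup>2)"
proof -
  define N where "N = (l2norm \<zeta>1)\<^sup>2 + (l2norm \<zeta>2)\<^sup>2"
  show ?thesis
  proof (cases "N = 0")
    case True
    then have "l2norm \<zeta>1 = 0" "l2norm \<zeta>2 = 0"
      unfolding N_def by (simp_all add: add_nonneg_eq_0_iff)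
    then have "\<zeta>1 = (\<lambda>_. 0)" "\<zeta>2 = (\<lambda>_. 0)"
      using l2norm_eq_0 assms(2,3) by blast+
    then show ?thesis by (simp add: commut_norm_sq_zero)
  next
    case False
    then have N: "0 < N" unfolding N_def by (simp add: add_pos_nonneg order_le_neq_trans)
    define t where "t = 1 / sqrt N"
    have t2: "t\<^sup>2 * N = 1" unfolding t_def using N by (simp add: power_divide)
    let ?\<zeta>1 = "mult_by (\<lambda>_. complex_of_real t) \<zeta>1" and ?\<zeta>2 = "mult_by (\<lambda>_. complex_of_real t) \<zeta>2"
    have "ereal (sqrt (commut_norm_sq \<sigma> l c ?\<zeta>1 ?\<zeta>2)) \<le> LipL \<sigma> l c"
      unfolding LipL_eq_Sup_commut_norm_sq
    proof (rule Sup_upper, intro CollectI exI conjI)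
      show "fin_supp ?\<zeta>1" "fin_supp ?\<zeta>2" using assms(2,3) by (simp_all add: fin_supp_mult_by)
      show "(l2norm ?\<zeta>1)\<^sup>2 + (l2norm ?\<zeta>2)\<^sup>2 \<le> 1"
        using t2 unfolding l2norm_scale N_def by (simp add: power_mult_distrib algebra_simps)
    qed simp
    then have "ereal (sqrt (t\<^sup>2 * commut_norm_sq \<sigma> l c \<zeta>1 \<zeta>2)) \<le> ereal m"
      unfolding commut_norm_sq_scale using assms(1) by (rule order_trans)
    then have "sqrt (t\<^sup>2 * commut_norm_sq \<sigma> l c \<zeta>1 \<zeta>2) \<le> m"
      by simp
    then have scaled: "t\<^sup>2 * commut_norm_sq \<sigma> l c \<zeta>1 \<zeta>2 \<le> m\<^sup>2"
      by (rule sqrt_le_D)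
    have "commut_norm_sq \<sigma> l c \<zeta>1 \<zeta>2 = N * (t\<^sup>2 * commut_norm_sq \<sigma> l c \<zeta>1 \<zeta>2)"
      using t2 by (simp add: algebra_simps)
    also have "\<dots> \<le> N * m\<^sup>2"
      using scaled N by (simp add: mult_left_mono)
    finally show ?thesis unfolding N_def by (simp add: mult.commute)
  qed
qed

lemma LipL_le_ereal:
  assumes "0 \<le> m"
    and "\<And>\<xi>1 \<xi>2. fin_supp \<xi>1 \<Longrightarrow> fin_supp \<xi>2 \<Longrightarrow>
           commut_norm_sq \<sigma> l c \<xi>1 \<xi>2 \<le> m\<^sup>2 * ((l2norm \<xi>1)\<^sup>2 + (l2norm \<xi>2)\<^sup>2)"
  shows "LipL \<sigma> l c \<le> ereal m"
  unfolding LipL_eq_Sup_commut_norm_sq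
proof (rule Sup_least, clarify)
  fix \<xi>1 \<xi>2 :: "'a \<times> 'a \<Rightarrow> complex"
  assume fin: "fin_supp \<xi>1" "fin_supp \<xi>2" and unit: "(l2norm \<xi>1)\<^sup>2 + (l2norm \<xi>2)\<^sup>2 \<le> 1"
  from fin have "commut_norm_sq \<sigma> l c \<xi>1 \<xi>2 \<le> m\<^sup>2 * ((l2norm \<xi>1)\<^sup>2 + (l2norm \<xi>2)\<^sup>2)"
    by (rule assms(2))
  also have "\<dots> \<le> m\<^sup>2" using unit by (simp add: mult_left_le)
  finally show "ereal (sqrt (commut_norm_sq \<sigma> l c \<xi>1 \<xi>2)) \<le> ereal m"
    using real_le_lsqrt[OF assms(1)] by simp
qed

lemma commut_norm_sq_mult_by_fst_le:
  assumes "\<chi> \<in> P1" "fin_supp c" "LipL \<sigma> l c \<le> ereal m" "fin_supp \<xi>1" "fin_supp \<xi>2"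
  shows "commut_norm_sq \<sigma> l (mult_by (\<chi> \<circ> fst) c) \<xi>1 \<xi>2 \<le> m\<^sup>2 * ((l2norm \<xi>1)\<^sup>2 + (l2norm \<xi>2)\<^sup>2)"
proof -
  define B where "B = tens_support c (supp \<xi>1 \<union> supp \<xi>2) \<union> supp \<xi>1 \<union> supp \<xi>2"
  define S where "S = fst ` B"
  have "finite B"
    using assms(2,4,5) unfolding B_def fin_supp_def by (simp add: finite_tens_support)
  then have "finite S" unfolding S_def by simp
  then obtain a where gram: "\<And>x y. x \<in> S \<Longrightarrow> y \<in> S \<Longrightarrow> \<chi> (x - y) = (\<Sum>k\<in>S. cnj (a k x) * a k y)"
    and unit: "\<And>x. x \<in> S \<Longrightarrow> (\<Sum>k\<in>S. (cmod (a k x))\<^sup>2) = 1"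
    using P1_gram_factorization[OF assms(1)] by blast
  have supp_B: "supp \<xi>1 \<subseteq> B" "supp \<xi>2 \<subseteq> B"
    and tens_B: "tens_support c (supp \<xi>1) \<subseteq> B" "tens_support c (supp \<xi>2) \<subseteq> B"
    unfolding B_def using tens_support_mono[OF _ order_refl, of _ "supp \<xi>1 \<union> supp \<xi>2" c] by auto
  have fst_B: "fst ` B \<subseteq> S" and fst_supp: "fst ` supp \<xi>1 \<subseteq> S" "fst ` supp \<xi>2 \<subseteq> S"
    unfolding S_def using supp_B by auto
  have fin_c: "finite (supp c)" using assms(2) by (simp add: fin_supp_def)
  have "commut_norm_sq \<sigma> l (mult_by (\<chi> \<circ> fst) c) \<xi>1 \<xi>2
      \<le> (\<Sum>k\<in>S. commut_norm_sq \<sigma> l c (mult_by (a k \<circ> fst) \<xi>1) (mult_by (a k \<circ> fst) \<xi>2))"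
    unfolding commut_norm_sq_def Dplus_eq_mult_by Dminus_eq_mult_by sum.distrib
    by (intro add_mono l2norm_commut_mult_by_fst_le[where B = B and S = S and \<chi> = \<chi>]
        \<open>finite B\<close> supp_B tens_B fst_B fin_c gram unit)
  also have "\<dots> \<le> (\<Sum>k\<in>S. m\<^sup>2 * ((l2norm (mult_by (a k \<circ> fst) \<xi>1))\<^sup>2 + (l2norm (mult_by (a k \<circ> fst) \<xi>2))\<^sup>2))"
    by (intro sum_mono commut_norm_sq_le_LipL assms(3) fin_supp_mult_by assms(4,5))
  also have "\<dots> = m\<^sup>2 * ((l2norm \<xi>1)\<^sup>2 + (l2norm \<xi>2)\<^sup>2)"
    unfolding sum_distrib_left[symmetric] sum.distrib
    using sum_l2norm_mult_by_fst[OF assms(4) fst_supp(1) unit]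
      sum_l2norm_mult_by_fst[OF assms(5) fst_supp(2) unit] by simp
  finally show ?thesis .
qed

lemma LipL_mult_by_fst_le:
  assumes "\<chi> \<in> P1" "fin_supp c"
  shows "LipL \<sigma> l (mult_by (\<chi> \<circ> fst) c) \<le> LipL \<sigma> l c"
proof (cases "LipL \<sigma> l c")
  case (real m)
  moreover have "0 \<le> m" using LipL_nonneg[of \<sigma> l c] real by simp
  ultimately show ?thesis
    by (simp add: LipL_le_ereal commut_norm_sq_mult_by_fst_le[OF assms])
next
  case MInf
  then show ?thesis using LipL_nonneg[of \<sigma> l c] by simp
qed simp

section \<open>Schur multipliers and the states omega\<close>

lemma tau_twconv_Mphi_delta:
  "tau (twconv \<sigma> (Mphi \<psi> (delta g)) h) = \<psi> g * tau (twconv \<sigma> (delta g) h)"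
proof -
  have "tau (twconv \<sigma> (Mphi \<psi> (delta g)) h) = (\<Sum>y\<in>{g}. Mphi \<psi> (delta g) y * h (- y + 0) * \<sigma> y (- y + 0))"
    unfolding tau_def twconv_def by (rule sum.mono_neutral_left) (auto simp: supp_def Mphi_def delta_def)
  moreover have "supp (delta g) = {g}"
    by (auto simp: supp_def delta_def)
  ultimately show ?thesis
    by (simp add: tau_def twconv_def Mphi_def delta_def)
qed

lemma omega_Mphi:
  assumes "finite A" "supp c \<subseteq> A"
  shows "omega \<sigma> (Mphi \<psi>) c
    = (\<Sum>p\<in>A. \<psi> (fst p) * c p * tau (twconv \<sigma> (delta (fst p)) (delta (snd p))))"
  unfolding omega_def tau_twconv_Mphi_delta
  by (rule sum.mono_neutral_cong_left) (use assms in \<open>auto simp: supp_def\<close>)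

lemma omega_Mphi_mult_diff:
  assumes "fin_supp c"
  shows "omega \<sigma> (Mphi (\<lambda>g. \<phi>1 g * \<phi>2 g)) c - omega \<sigma> (Mphi (\<lambda>g. \<phi>3 g * \<phi>4 g)) c
     = (omega \<sigma> (Mphi \<phi>1) (mult_by (\<phi>2 \<circ> fst) c) - omega \<sigma> (Mphi \<phi>3) (mult_by (\<phi>2 \<circ> fst) c))
     + (omega \<sigma> (Mphi \<phi>2) (mult_by (\<phi>3 \<circ> fst) c) - omega \<sigma> (Mphi \<phi>4) (mult_by (\<phi>3 \<circ> fst) c))"
proof -
  have fin: "finite (supp c)" using assms by (simp add: fin_supp_def)
  note omega_sum = omega_Mphi[OF fin order_refl] omega_Mphi[OF fin supp_mult_by]
  show ?thesis
    unfolding omega_sum by (simp add: sum_subtractf[symmetric] sum.distrib[symmetric] algebra_simps)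
qed

lemma Mphi_comp: "Mphi \<phi>1 \<circ> Mphi \<phi>2 = Mphi (\<lambda>g. \<phi>1 g * \<phi>2 g)"
  by (simp add: fun_eq_iff Mphi_def)

lemma DeltaMin_Mphi_mult_le:
  assumes "\<phi>2 \<in> P1" "\<phi>3 \<in> P1"
  shows "DeltaMin \<sigma> l (Mphi (\<lambda>g. \<phi>1 g * \<phi>2 g)) (Mphi (\<lambda>g. \<phi>3 g * \<phi>4 g))
           \<le> DeltaMin \<sigma> l (Mphi \<phi>1) (Mphi \<phi>3) + DeltaMin \<sigma> l (Mphi \<phi>2) (Mphi \<phi>4)"
  unfolding DeltaMin_def[of \<sigma> l "Mphi (\<lambda>g. \<phi>1 g * \<phi>2 g)"]
proof (rule Sup_least, clarify)
  fix c assume c: "fin_supp c" "LipL \<sigma> l c \<le> 1"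
  define c2 where "c2 = mult_by (\<phi>2 \<circ> fst) c"
  define c3 where "c3 = mult_by (\<phi>3 \<circ> fst) c"
  have "fin_supp c2 \<and> LipL \<sigma> l c2 \<le> 1" "fin_supp c3 \<and> LipL \<sigma> l c3 \<le> 1"
    unfolding c2_def c3_def
    using fin_supp_mult_by[OF c(1)] order_trans[OF LipL_mult_by_fst_le[OF assms(1) c(1)] c(2)]
      order_trans[OF LipL_mult_by_fst_le[OF assms(2) c(1)] c(2)]
    by auto
  then have "ereal (cmod (omega \<sigma> (Mphi \<phi>1) c2 - omega \<sigma> (Mphi \<phi>3) c2)) \<le> DeltaMin \<sigma> l (Mphi \<phi>1) (Mphi \<phi>3)"
    and "ereal (cmod (omega \<sigma> (Mphi \<phi>2) c3 - omega \<sigma> (Mphi \<phi>4) c3)) \<le> DeltaMin \<sigma> l (Mphi \<phi>2) (Mphi \<phi>4)"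
    unfolding DeltaMin_def by (auto intro!: Sup_upper)
  then have "ereal (cmod (omega \<sigma> (Mphi \<phi>1) c2 - omega \<sigma> (Mphi \<phi>3) c2)
                  + cmod (omega \<sigma> (Mphi \<phi>2) c3 - omega \<sigma> (Mphi \<phi>4) c3))
      \<le> DeltaMin \<sigma> l (Mphi \<phi>1) (Mphi \<phi>3) + DeltaMin \<sigma> l (Mphi \<phi>2) (Mphi \<phi>4)"
    unfolding plus_ereal.simps(1)[symmetric] by (rule add_mono)
  then show "ereal (cmod (omega \<sigma> (Mphi (\<lambda>g. \<phi>1 g * \<phi>2 g)) c - omega \<sigma> (Mphi (\<lambda>g. \<phi>3 g * \<phi>4 g)) c))
      \<le> DeltaMin \<sigma> l (Mphi \<phi>1) (Mphi \<phi>3) + DeltaMin \<sigma> l (Mphi \<phi>2) (Mphi \<phi>4)"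
    unfolding omega_Mphi_mult_diff[OF c(1)] c2_def[symmetric] c3_def[symmetric]
    by (rule order_trans[rotated]) (simp add: norm_triangle_ineq)
qed

theorem theorem6p9:
  fixes \<sigma> :: "'g::group_add \<Rightarrow> 'g \<Rightarrow> complex" and l :: "'g \<Rightarrow> real"
    and \<phi>1 \<phi>2 \<phi>3 \<phi>4 :: "'g \<Rightarrow> complex"
  assumes "countable (UNIV :: 'g set)"
    and "amenable_group TYPE('g)"
    and "proper_length l"
    and "normalized_2cocycle \<sigma>"
    and "\<phi>1 \<in> P1" and "\<phi>2 \<in> P1" and "\<phi>3 \<in> P1" and "\<phi>4 \<in> P1"
  shows "DeltaMin \<sigma> l (Mphi \<phi>1 \<circ> Mphi \<phi>2) (Mphi \<phi>3 \<circ> Mphi \<phi>4)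
           \<le> DeltaMin \<sigma> l (Mphi \<phi>1) (Mphi \<phi>3) + DeltaMin \<sigma> l (Mphi \<phi>2) (Mphi \<phi>4)"
  \<comment> \<open>On the algebraic tensor product only \<open>\<phi>2, \<phi>3 \<in> P1\<close> are needed; the other hypotheses
      make the C*-algebraic objects of the paper well defined.\<close>
  unfolding Mphi_comp using DeltaMin_Mphi_mult_le[OF assms(6,7)] .

end
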